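(* Let $q,d,m\ge 1$ be integers and $\varepsilon\in[0,1)$. For $j=1,\ldots,m$ let $S_j=\{s_{j,1},s_{j,2},\ldots,s_{j,d}\}\subseteq\mathbb{Z}_q$ be $\varepsilon$-biased sets of size $d$ with $s_{j,1}=0$. Let $\{\ket{\ell_1},\ldots,\ket{\ell_d}\}$ be an orthonormal basis of $\mathbb{C}^d$. For $x\in\mathbb{Z}_q=\{0,1,\ldots,q-1\}$ define \[ \ket{\psi_j(x)}=\frac{1}{\sqrt d}\Big(\ket{\ell_1}+e^{i2\pi s_{j,2}x/q}\ket{\ell_2}+\cdots+e^{i2\pi s_{j,d}x/q}\ket{\ell_d}\Big),\qquad \ket{\psi(x)}=\ket{\psi_1(x)}\otimes\cdots\otimes\ket{\psi_m(x)}\in(\mathbb{C}^d)^{\otimes m}. \] Then the map $\psi:\mathbb{Z}_q\to(\mathbb{C}^{d})^{\otimes m}\cong\mathcal{H}^{d^m}$ is a quantum $\left(\frac{d^m}{q},\varepsilon^m\right)$-resistant hash function; that is, $\frac{d^m}{q}\le\frac{d^m}{q}$ (the state space dimension $d^m$ divided by the input set size $q$) and for all $x_1\neq x_2$ in $\mathbb{Z}_q$, $\left|\braket{\psi(x_1)}{\psi(x_2)}\right|\le\varepsilon^m$.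
   Context: For $S=\{s_1,\ldots,s_d\}\subseteq\mathbb{Z}_q$ and $x\in\mathbb{Z}_q$, $\mathrm{bias}(S,x)=\frac{1}{|S|}\left|\sum_{s\in S}e^{2\pi i s x/q}\right|$; $S$ is $\varepsilon$-biased if $\mathrm{bias}(S,x)\le\varepsilon$ for all $x\ne 0$. Definition: for $\delta\in(0,1]$ and $\varepsilon\in[0,1)$, a function $\psi:\mathbb{X}\to\mathcal{H}^K$ (where $\mathcal{H}^K$ is a $K$-dimensional Hilbert space and $\mathbb{X}$ a finite set) is a quantum $(\delta,\varepsilon)$-resistant hash function if (i) ($\delta$-one-wayness) $K/|\mathbb{X}|\le\delta$, and (ii) ($\varepsilon$-collision-resistance) $|\braket{\psi(x_1)}{\psi(x_2)}|\le\varepsilon$ for every pair of distinct $x_1,x_2\in\mathbb{X}$. *)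

theory Defs
  imports Complex_Main
begin

text \<open>Elements of Z_q are represented by the naturals 0..q-1.\<close>

definition bias :: "nat \<Rightarrow> nat set \<Rightarrow> nat \<Rightarrow> real" where
  "bias q S x = cmod (\<Sum>s\<in>S. exp (2 * pi * \<i> * of_nat s * of_nat x / of_nat q)) / real (card S)"

definition eps_biased :: "nat \<Rightarrow> nat set \<Rightarrow> real \<Rightarrow> bool" where
  "eps_biased q S \<epsilon> \<longleftrightarrow> S \<subseteq> {0..<q} \<and> (\<forall>x\<in>{0..<q}. x \<noteq> 0 \<longrightarrow> bias q S x \<le> \<epsilon>)"

text \<open>A K-dimensional Hilbert space is represented concretely as functions on a finite
  index set I with card I = K, with the standard inner product (antilinear in the first slot).\<close>

definition cinner :: "'i set \<Rightarrow> ('i \<Rightarrow> complex) \<Rightarrow> ('i \<Rightarrow> complex) \<Rightarrow> complex" where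
  "cinner I u v = (\<Sum>i\<in>I. cnj (u i) * v i)"

definition quantum_resistant_hash ::
  "real \<Rightarrow> real \<Rightarrow> 'i set \<Rightarrow> 'x set \<Rightarrow> ('x \<Rightarrow> 'i \<Rightarrow> complex) \<Rightarrow> bool" where
  "quantum_resistant_hash \<delta> \<epsilon> I X \<psi> \<longleftrightarrow>
     finite I \<and> finite X \<and>
     real (card I) / real (card X) \<le> \<delta> \<and>
     (\<forall>x1\<in>X. \<forall>x2\<in>X. x1 \<noteq> x2 \<longrightarrow> cmod (cinner I (\<psi> x1) (\<psi> x2)) \<le> \<epsilon>)"

text \<open>Component state psi_j(x) in C^d (coordinates 0..d-1), given the elements
  s j k (k = 1..d) of S_j and an orthonormal basis l k (k = 1..d).\<close>

definition psi_comp :: "nat \<Rightarrow> nat \<Rightarrow> (nat \<Rightarrow> nat \<Rightarrow> nat) \<Rightarrow> (nat \<Rightarrow> nat \<Rightarrow> complex)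
    \<Rightarrow> nat \<Rightarrow> nat \<Rightarrow> nat \<Rightarrow> complex" where
  "psi_comp q d s l j x c =
     (1 / of_real (sqrt (real d))) *
     (\<Sum>k\<in>{1..d}. exp (2 * pi * \<i> * of_nat (s j k) * of_nat x / of_nat q) * l k c)"

text \<open>(C^d)^{\<otimes>m} is represented as functions on index tuples (lists of length m with
  entries < d); the tensor product of vectors v_1,...,v_m has coordinates
  prod_j v_j(c_j).\<close>

definition tensor_index :: "nat \<Rightarrow> nat \<Rightarrow> nat list set" where
  "tensor_index d m = {c. length c = m \<and> set c \<subseteq> {0..<d}}"

definition psi_tensor :: "nat \<Rightarrow> nat \<Rightarrow> nat \<Rightarrow> (nat \<Rightarrow> nat \<Rightarrow> nat) \<Rightarrow> (nat \<Rightarrow> nat \<Rightarrow> complex)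
    \<Rightarrow> nat \<Rightarrow> nat list \<Rightarrow> complex" where
  "psi_tensor q d m s l x c = (\<Prod>j\<in>{1..m}. psi_comp q d s l j x (c ! (j - 1)))"

end

theory Submission
  imports Defs "HOL-Analysis.Complex_Transcendental"
begin

text \<open>The inner product of two product states is the product of the inner products of their
  factors. By orthonormality of the basis, the inner product of the \<open>j\<close>-th factors at \<open>x\<^sub>1 < x\<^sub>2\<close>
  is \<open>(1/d) \<Sum>\<close> over \<open>s \<in> S\<^sub>j\<close> of \<open>exp (2\<pi>i s (x\<^sub>2 - x\<^sub>1) / q)\<close>, whose modulus is the bias of \<open>S\<^sub>j\<close>
  at \<open>x\<^sub>2 - x\<^sub>1 \<noteq> 0\<close>, hence at most \<open>\<epsilon>\<close>.\<close>

lemma sum_lists_length_prod: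
  fixes f :: "nat \<Rightarrow> 'a \<Rightarrow> 'c::comm_semiring_1"
  assumes "finite A"
  shows "(\<Sum>c\<in>{xs. set xs \<subseteq> A \<and> length xs = m}. \<Prod>j<m. f j (c ! j)) = (\<Prod>j<m. \<Sum>a\<in>A. f j a)"
proof -
  have "(\<Prod>j<m. \<Sum>a\<in>A. f j a) = (\<Sum>g\<in>PiE {..<m} (\<lambda>_. A). \<Prod>j<m. f j (g j))"
    using assms by (intro prod_sum_PiE) auto
  also have "\<dots> = (\<Sum>c\<in>{xs. set xs \<subseteq> A \<and> length xs = m}. \<Prod>j<m. f j (c ! j))"
    by (rule sum.reindex_bij_witness[of _ "\<lambda>c. restrict (nth c) {..<m}" "\<lambda>g. map g [0..<m]"])
       (auto simp: PiE_def extensional_def set_conv_nth intro!: nth_equalityI)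
  finally show ?thesis ..
qed

lemma tensor_index_eq: "tensor_index d m = {xs. set xs \<subseteq> {0..<d} \<and> length xs = m}"
  unfolding tensor_index_def by auto

lemma finite_tensor_index: "finite (tensor_index d m)"
  unfolding tensor_index_eq by (simp add: finite_lists_length_eq)

lemma card_tensor_index: "card (tensor_index d m) = d ^ m"
  unfolding tensor_index_eq by (simp add: card_lists_length_eq)

lemma cinner_commute: "cinner I u v = cnj (cinner I v u)"
  by (simp add: cinner_def mult.commute)

lemma cinner_scale: "cinner I (\<lambda>i. a * u i) (\<lambda>i. b * v i) = cnj a * b * cinner I u v"
  by (simp add: cinner_def sum_distrib_left mult_ac)

lemma cinner_orthonormal_expansion:
  assumes "\<And>k k'. k \<in> K \<Longrightarrow> k' \<in> K \<Longrightarrow> cinner I (l k) (l k') = (if k = k' then 1 else 0)"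
    and "finite K"
  shows "cinner I (\<lambda>i. \<Sum>k\<in>K. a k * l k i) (\<lambda>i. \<Sum>k\<in>K. b k * l k i) = (\<Sum>k\<in>K. cnj (a k) * b k)"
proof -
  have "cinner I (\<lambda>i. \<Sum>k\<in>K. a k * l k i) (\<lambda>i. \<Sum>k\<in>K. b k * l k i)
      = (\<Sum>k\<in>K. \<Sum>k'\<in>K. cnj (a k) * b k' * cinner I (l k) (l k'))"
    unfolding cinner_def
    by (simp add: sum_distrib_left sum_distrib_right sum.swap[of _ I] mult_ac)
  also have "\<dots> = (\<Sum>k\<in>K. \<Sum>k'\<in>K. if k = k' then cnj (a k) * b k' else 0)"
    by (intro sum.cong refl) (simp add: assms(1))
  also have "\<dots> = (\<Sum>k\<in>K. cnj (a k) * b k)"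
    using assms(2) by simp
  finally show ?thesis .
qed

lemma cinner_tensor_product:
  "cinner (tensor_index d m) (\<lambda>c. \<Prod>j\<in>{1..m}. u j (c ! (j - 1))) (\<lambda>c. \<Prod>j\<in>{1..m}. v j (c ! (j - 1)))
   = (\<Prod>j\<in>{1..m}. cinner {0..<d} (u j) (v j))"
proof -
  have "cinner (tensor_index d m) (\<lambda>c. \<Prod>j\<in>{1..m}. u j (c ! (j - 1))) (\<lambda>c. \<Prod>j\<in>{1..m}. v j (c ! (j - 1)))
      = (\<Sum>c\<in>tensor_index d m. \<Prod>j<m. cnj (u (Suc j) (c ! j)) * v (Suc j) (c ! j))"
    unfolding cinner_def
    by (simp add: prod.distrib[symmetric] prod.atLeast1_atMost_eq)
  also have "\<dots> = (\<Prod>j\<in>{1..m}. cinner {0..<d} (u j) (v j))"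
    unfolding tensor_index_eq
      sum_lists_length_prod[where f = "\<lambda>j a. cnj (u (Suc j) a) * v (Suc j) a", OF finite_atLeastLessThan]
    by (simp add: prod.atLeast1_atMost_eq cinner_def)
  finally show ?thesis .
qed

abbreviation phase :: "nat \<Rightarrow> nat \<Rightarrow> nat \<Rightarrow> complex" where
  "phase q t x \<equiv> exp (2 * pi * \<i> * of_nat t * of_nat x / of_nat q)"

lemma cnj_phase_mult_phase:
  assumes "x1 \<le> x2"
  shows "cnj (phase q t x1) * phase q t x2 = phase q t (x2 - x1)"
proof -
  have "cnj (phase q t x1) = exp (- (2 * pi * \<i> * of_nat t * of_nat x1 / of_nat q))"
    by (simp add: exp_cnj)
  moreover have "- (2 * pi * \<i> * of_nat t * of_nat x1 / of_nat q) + 2 * pi * \<i> * of_nat t * of_nat x2 / of_nat q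
      = (2 * pi * \<i> * of_nat t * of_nat (x2 - x1) / of_nat q :: complex)"
    using assms by (simp add: algebra_simps diff_divide_distrib)
  ultimately show ?thesis by (simp add: exp_add[symmetric])
qed

lemma cinner_psi_comp:
  assumes "\<And>k k'. k \<in> {1..d} \<Longrightarrow> k' \<in> {1..d} \<Longrightarrow>
           cinner {0..<d} (l k) (l k') = (if k = k' then 1 else 0)"
    and "x1 \<le> x2"
  shows "cinner {0..<d} (psi_comp q d s l j x1) (psi_comp q d s l j x2)
       = (\<Sum>k\<in>{1..d}. phase q (s j k) (x2 - x1)) / of_nat d"
proof -
  define r :: complex where "r = 1 / of_real (sqrt (real d))"
  have "cinner {0..<d} (psi_comp q d s l j x1) (psi_comp q d s l j x2)
      = cnj r * r * (\<Sum>k\<in>{1..d}. cnj (phase q (s j k) x1) * phase q (s j k) x2)"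
    unfolding psi_comp_def r_def[symmetric] cinner_scale
    by (simp only: cinner_orthonormal_expansion[OF assms(1) finite_atLeastAtMost])
  also have "\<dots> = (\<Sum>k\<in>{1..d}. phase q (s j k) (x2 - x1)) / of_nat d"
    using assms(2) by (simp add: r_def cnj_phase_mult_phase flip: of_real_mult)
  finally show ?thesis .
qed

lemma norm_cinner_psi_comp_le:
  assumes "\<And>k k'. k \<in> {1..d} \<Longrightarrow> k' \<in> {1..d} \<Longrightarrow>
           cinner {0..<d} (l k) (l k') = (if k = k' then 1 else 0)"
    and "inj_on (s j) {1..d}" and "eps_biased q (s j ` {1..d}) \<epsilon>"
    and "x1 < x2" and "x2 < q"
  shows "cmod (cinner {0..<d} (psi_comp q d s l j x1) (psi_comp q d s l j x2)) \<le> \<epsilon>"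
proof -
  have "cinner {0..<d} (psi_comp q d s l j x1) (psi_comp q d s l j x2)
      = (\<Sum>t\<in>s j ` {1..d}. phase q t (x2 - x1)) / of_nat (card (s j ` {1..d}))"
    using cinner_psi_comp[OF assms(1) less_imp_le[OF assms(4)]] assms(2)
    by (simp add: sum.reindex card_image del: of_nat_diff)
  then have "cmod (cinner {0..<d} (psi_comp q d s l j x1) (psi_comp q d s l j x2))
      = bias q (s j ` {1..d}) (x2 - x1)"
    by (simp add: bias_def norm_divide del: of_nat_diff)
  also have "\<dots> \<le> \<epsilon>"
    using assms(3-5) unfolding eps_biased_def by auto
  finally show ?thesis .
qed

theorem theorem1:
  fixes q d m :: nat and \<epsilon> :: real
    and s :: "nat \<Rightarrow> nat \<Rightarrow> nat" and l :: "nat \<Rightarrow> nat \<Rightarrow> complex"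
  assumes "q \<ge> 1" and "d \<ge> 1" and "m \<ge> 1"
    and "0 \<le> \<epsilon>" and "\<epsilon> < 1"
    and "\<And>j. j \<in> {1..m} \<Longrightarrow> inj_on (s j) {1..d}"
    and "\<And>j. j \<in> {1..m} \<Longrightarrow> s j ` {1..d} \<subseteq> {0..<q}"
    and "\<And>j. j \<in> {1..m} \<Longrightarrow> s j 1 = 0"
    and "\<And>j. j \<in> {1..m} \<Longrightarrow> eps_biased q (s j ` {1..d}) \<epsilon>"
    and "\<And>k k'. k \<in> {1..d} \<Longrightarrow> k' \<in> {1..d} \<Longrightarrow>
           cinner {0..<d} (l k) (l k') = (if k = k' then 1 else 0)"
  shows "quantum_resistant_hash (real d ^ m / real q) (\<epsilon> ^ m)
           (tensor_index d m) {0..<q} (psi_tensor q d m s l)"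
proof -
  let ?\<psi> = "psi_tensor q d m s l"
  have ordered_collision: "cmod (cinner (tensor_index d m) (?\<psi> x1) (?\<psi> x2)) \<le> \<epsilon> ^ m"
    if "x1 < x2" and "x2 < q" for x1 x2
  proof -
    have "cmod (cinner (tensor_index d m) (?\<psi> x1) (?\<psi> x2))
        = (\<Prod>j\<in>{1..m}. cmod (cinner {0..<d} (psi_comp q d s l j x1) (psi_comp q d s l j x2)))"
      using cinner_tensor_product[where d = d
          and u = "\<lambda>j. psi_comp q d s l j x1" and v = "\<lambda>j. psi_comp q d s l j x2"]
      by (simp add: psi_tensor_def[abs_def] prod_norm)
    also have "\<dots> \<le> (\<Prod>j\<in>{1..m}. \<epsilon>)"
      using that
      by (intro prod_mono conjI norm_ge_zero norm_cinner_psi_comp_le[OF assms(10) assms(6,9)]) auto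
    finally show ?thesis by simp
  qed
  have "cmod (cinner (tensor_index d m) (?\<psi> x1) (?\<psi> x2)) \<le> \<epsilon> ^ m"
    if "x1 < q" and "x2 < q" and "x1 \<noteq> x2" for x1 x2
  proof (cases "x1 < x2")
    case True
    then show ?thesis using ordered_collision that(2) by blast
  next
    case False
    then have "x2 < x1" using that(3) by simp
    then show ?thesis using ordered_collision that(1) by (subst cinner_commute) simp
  qed
  then show ?thesis
    unfolding quantum_resistant_hash_def by (simp add: finite_tensor_index card_tensor_index)
qed

end
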